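(* If an $n$-agent network is $k$-redundant and $\bigcap_{i=1}^n\ker A_i=\{0\}$, then for any subset $\mathcal S\subset\mathcal V$ with $|\mathcal S|\ge n-k$, $\bigcap_{i\in\mathcal S}\ker A_i=\{0\}$.
   Context: An $n$-agent network: agents $\mathcal V=\{1,\dots,n\}$, each agent $i$ having real matrices $A_i\in\mathbb R^{r_i\times d}$, $b_i\in\mathbb R^{r_i}$. The network is $k$-redundant ($k\in\{0,1,\dots,n-1\}$) if for any $\mathcal S_1,\mathcal S_2\subset\mathcal V$ with $|\mathcal S_1|=|\mathcal S_2|=n-k$, $\arg\min_x\sum_{i\in\mathcal S_1}\|A_ix-b_i\|_2^2=\arg\min_x\sum_{i\in\mathcal S_2}\|A_ix-b_i\|_2^2$. *)

theory Defs
  imports "HOL-Analysis.Analysis"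
begin

text \<open>Agent i has matrix A_i with r i rows; row j (j < r i) of A_i is the vector
  A i j in R^d (d is the finite index type 'd), and b i j is entry j of b_i.\<close>

definition matvec :: "(nat \<Rightarrow> nat \<Rightarrow> real^'d) \<Rightarrow> nat \<Rightarrow> real^'d \<Rightarrow> nat \<Rightarrow> real" where
  "matvec A i x = (\<lambda>j. A i j \<bullet> x)"

definition agent_cost ::
  "(nat \<Rightarrow> nat) \<Rightarrow> (nat \<Rightarrow> nat \<Rightarrow> real^'d) \<Rightarrow> (nat \<Rightarrow> nat \<Rightarrow> real) \<Rightarrow> nat \<Rightarrow> real^'d \<Rightarrow> real" where
  "agent_cost r A b i x = (\<Sum>j<r i. (matvec A i x j - b i j)^2)"

definition agg_argmin ::
  "(nat \<Rightarrow> nat) \<Rightarrow> (nat \<Rightarrow> nat \<Rightarrow> real^'d) \<Rightarrow> (nat \<Rightarrow> nat \<Rightarrow> real) \<Rightarrow> nat set \<Rightarrow> (real^'d) set" where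
  "agg_argmin r A b S = {x. \<forall>y. (\<Sum>i\<in>S. agent_cost r A b i x) \<le> (\<Sum>i\<in>S. agent_cost r A b i y)}"

definition k_redundant ::
  "nat \<Rightarrow> nat \<Rightarrow> (nat \<Rightarrow> nat) \<Rightarrow> (nat \<Rightarrow> nat \<Rightarrow> real^'d) \<Rightarrow> (nat \<Rightarrow> nat \<Rightarrow> real) \<Rightarrow> bool" where
  "k_redundant n k r A b \<longleftrightarrow>
     (\<forall>S1 S2. S1 \<subseteq> {1..n} \<and> S2 \<subseteq> {1..n} \<and> card S1 = n - k \<and> card S2 = n - k
        \<longrightarrow> agg_argmin r A b S1 = agg_argmin r A b S2)"

definition agent_ker :: "(nat \<Rightarrow> nat) \<Rightarrow> (nat \<Rightarrow> nat \<Rightarrow> real^'d) \<Rightarrow> nat \<Rightarrow> (real^'d) set" where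
  "agent_ker r A i = {x. \<forall>j<r i. matvec A i x j = 0}"

end

theory Submission
  imports Defs
begin

text \<open>Flattening the rows of all agents in \<open>S\<close> into one index set turns the aggregate cost into a
  least-squares cost \<open>\<Sum>p. (a p \<bullet> x - \<beta> p)\<^sup>2\<close>. Its set of minimizers is nonempty and is a translate
  of the common kernel \<open>{u. \<forall>p. a p \<bullet> u = 0}\<close>. Hence, under \<open>k\<close>-redundancy, all sets of \<open>n - k\<close>
  agents have the same common kernel. Since every agent lies in such a set, this kernel is contained
  in \<open>\<Inter>\<^sub>i ker A\<^sub>i = {0}\<close>, and a larger set of agents only has a smaller kernel.\<close>

definition lsq_cost :: "('i \<Rightarrow> 'a::real_inner) \<Rightarrow> ('i \<Rightarrow> real) \<Rightarrow> 'i set \<Rightarrow> 'a \<Rightarrow> real" where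
  "lsq_cost a \<beta> I x = (\<Sum>p\<in>I. (a p \<bullet> x - \<beta> p)\<^sup>2)"

definition lsq_argmin :: "('i \<Rightarrow> 'a::real_inner) \<Rightarrow> ('i \<Rightarrow> real) \<Rightarrow> 'i set \<Rightarrow> 'a set" where
  "lsq_argmin a \<beta> I = {x. \<forall>y. lsq_cost a \<beta> I x \<le> lsq_cost a \<beta> I y}"

lemma lsq_cost_add:
  "lsq_cost a \<beta> I (x + h) =
     lsq_cost a \<beta> I x + 2 * (\<Sum>p\<in>I. (a p \<bullet> x - \<beta> p) * (a p \<bullet> h)) + (\<Sum>p\<in>I. (a p \<bullet> h)\<^sup>2)"
proof -
  have "lsq_cost a \<beta> I (x + h) =
      (\<Sum>p\<in>I. (a p \<bullet> x - \<beta> p)\<^sup>2 + 2 * ((a p \<bullet> x - \<beta> p) * (a p \<bullet> h)) + (a p \<bullet> h)\<^sup>2)"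
    unfolding lsq_cost_def
    by (intro sum.cong refl) (simp add: inner_add_right power2_eq_square algebra_simps)
  then show ?thesis
    by (simp add: lsq_cost_def sum.distrib sum_distrib_left)
qed

lemma sum_inner_squares_eq_0_iff:
  assumes "finite I"
  shows "(\<Sum>p\<in>I. (a p \<bullet> u)\<^sup>2) = 0 \<longleftrightarrow> (\<forall>p\<in>I. a p \<bullet> u = 0)"
  using assms by (simp add: sum_nonneg_eq_0_iff)

text \<open>The normal equations \<open>A\<^sup>T A x = A\<^sup>T \<beta>\<close> are solvable: the component of \<open>A\<^sup>T \<beta>\<close> orthogonal
  to the range of \<open>A\<^sup>T A\<close> lies in \<open>ker A\<close>, and \<open>A\<^sup>T \<beta>\<close> itself is orthogonal to \<open>ker A\<close>.\<close>

lemma lsq_normal_equations_solvable: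
  fixes a :: "'i \<Rightarrow> 'a::euclidean_space"
  assumes "finite I"
  shows "\<exists>x. (\<Sum>p\<in>I. (a p \<bullet> x) *\<^sub>R a p) = (\<Sum>p\<in>I. \<beta> p *\<^sub>R a p)"
proof -
  define M where "M = (\<lambda>x. \<Sum>p\<in>I. (a p \<bullet> x) *\<^sub>R a p)"
  define c where "c = (\<Sum>p\<in>I. \<beta> p *\<^sub>R a p)"
  have "linear M"
    by (rule linearI) (simp_all add: M_def inner_add_right scaleR_add_left sum.distrib scaleR_sum_right)
  then have range_M: "subspace (range M)"
    using subspace_UNIV linear_subspace_image by blast
  obtain y z where y: "y \<in> span (range M)" and z: "\<And>w. w \<in> span (range M) \<Longrightarrow> orthogonal z w"
    and c_split: "c = y + z"
    using orthogonal_subspace_decomp_exists[of "range M" c] by blast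
  have "(\<Sum>p\<in>I. (a p \<bullet> z)\<^sup>2) = z \<bullet> M z"
    by (simp add: M_def inner_sum_right inner_commute power2_eq_square)
  also have "\<dots> = 0"
    using z[of "M z"] by (simp add: span_base orthogonal_def)
  finally have "\<forall>p\<in>I. a p \<bullet> z = 0"
    using sum_inner_squares_eq_0_iff[OF assms] by blast
  then have "z \<bullet> c = 0"
    by (simp add: c_def inner_sum_right inner_commute)
  moreover have "z \<bullet> y = 0"
    using z[OF y] by (simp add: orthogonal_def)
  moreover have "z \<bullet> z = z \<bullet> c - z \<bullet> y"
    by (simp add: c_split inner_add_right)
  ultimately have "z = 0"
    by simp
  moreover have "y \<in> range M"
    using y range_M by (metis span_eq_iff)
  ultimately have "c \<in> range M"
    using c_split by simp
  then show ?thesis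
    by (auto simp: M_def c_def)
qed

lemma lsq_argmin_nonempty:
  fixes a :: "'i \<Rightarrow> 'a::euclidean_space"
  assumes "finite I"
  shows "lsq_argmin a \<beta> I \<noteq> {}"
proof -
  obtain x where x: "(\<Sum>p\<in>I. (a p \<bullet> x) *\<^sub>R a p) = (\<Sum>p\<in>I. \<beta> p *\<^sub>R a p)"
    using lsq_normal_equations_solvable[OF assms] by blast
  have x_le: "lsq_cost a \<beta> I x \<le> lsq_cost a \<beta> I (x + h)" for h
  proof -
    have "(\<Sum>p\<in>I. (a p \<bullet> x - \<beta> p) * (a p \<bullet> h)) =
        h \<bullet> (\<Sum>p\<in>I. (a p \<bullet> x) *\<^sub>R a p) - h \<bullet> (\<Sum>p\<in>I. \<beta> p *\<^sub>R a p)"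
      by (simp add: inner_sum_right inner_commute left_diff_distrib sum_subtractf)
    also have "\<dots> = 0"
      by (simp add: x)
    finally have "lsq_cost a \<beta> I (x + h) = lsq_cost a \<beta> I x + (\<Sum>p\<in>I. (a p \<bullet> h)\<^sup>2)"
      by (simp add: lsq_cost_add)
    then show ?thesis
      by (simp add: sum_nonneg)
  qed
  have "x \<in> lsq_argmin a \<beta> I"
    using x_le[of "_ - x"] by (simp add: lsq_argmin_def)
  then show ?thesis
    by blast
qed

lemma lsq_argmin_translate_iff:
  assumes "finite I" and x: "x \<in> lsq_argmin a \<beta> I"
  shows "x + u \<in> lsq_argmin a \<beta> I \<longleftrightarrow> (\<forall>p\<in>I. a p \<bullet> u = 0)"
proof
  define \<gamma> where "\<gamma> = (\<Sum>p\<in>I. (a p \<bullet> x - \<beta> p) * (a p \<bullet> u))"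
  define \<alpha> where "\<alpha> = (\<Sum>p\<in>I. (a p \<bullet> u)\<^sup>2)"
  have cost_line: "lsq_cost a \<beta> I (x + t *\<^sub>R u) = lsq_cost a \<beta> I x + 2 * t * \<gamma> + t\<^sup>2 * \<alpha>" for t
    by (simp add: lsq_cost_add \<gamma>_def \<alpha>_def sum_distrib_left power_mult_distrib algebra_simps)
  assume "x + u \<in> lsq_argmin a \<beta> I"
  then have "lsq_cost a \<beta> I (x + 1 *\<^sub>R u) \<le> lsq_cost a \<beta> I x"
    by (simp add: lsq_argmin_def)
  moreover have "lsq_cost a \<beta> I x \<le> lsq_cost a \<beta> I (x + (1/2) *\<^sub>R u)"
    using x by (simp add: lsq_argmin_def)
  ultimately have "\<alpha> \<le> 0"
    unfolding cost_line by (simp add: power2_eq_square)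
  moreover have "0 \<le> \<alpha>"
    by (simp add: \<alpha>_def sum_nonneg)
  ultimately have "\<alpha> = 0"
    by linarith
  then show "\<forall>p\<in>I. a p \<bullet> u = 0"
    using sum_inner_squares_eq_0_iff[OF \<open>finite I\<close>, of a u] by (simp add: \<alpha>_def)
next
  assume "\<forall>p\<in>I. a p \<bullet> u = 0"
  then have "lsq_cost a \<beta> I (x + u) = lsq_cost a \<beta> I x"
    by (simp add: lsq_cost_add)
  then show "x + u \<in> lsq_argmin a \<beta> I"
    using x by (simp add: lsq_argmin_def)
qed

lemma lsq_kernel_eq_if_argmin_eq:
  fixes a :: "'i \<Rightarrow> 'a::euclidean_space"
  assumes "finite I" "finite J" and "lsq_argmin a \<beta> I = lsq_argmin a \<beta> J"
  shows "(\<forall>p\<in>I. a p \<bullet> u = 0) \<longleftrightarrow> (\<forall>p\<in>J. a p \<bullet> u = 0)"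
proof -
  obtain x where x: "x \<in> lsq_argmin a \<beta> I"
    using lsq_argmin_nonempty[OF \<open>finite I\<close>] by blast
  have "(\<forall>p\<in>I. a p \<bullet> u = 0) \<longleftrightarrow> x + u \<in> lsq_argmin a \<beta> I"
    using lsq_argmin_translate_iff[OF \<open>finite I\<close> x] by simp
  also have "\<dots> \<longleftrightarrow> (\<forall>p\<in>J. a p \<bullet> u = 0)"
    using lsq_argmin_translate_iff[OF \<open>finite J\<close>] x assms(3) by simp
  finally show ?thesis .
qed

lemma agg_argmin_eq_lsq_argmin:
  assumes "finite S"
  shows "agg_argmin r A b S = lsq_argmin (case_prod A) (case_prod b) (SIGMA i:S. {..<r i})"
  using assms
  by (simp add: agg_argmin_def lsq_argmin_def lsq_cost_def agent_cost_def matvec_def sum.Sigma split_def)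

lemma agent_ker_Inter_eq:
  "(\<Inter>i\<in>S. agent_ker r A i) = {u. \<forall>p\<in>(SIGMA i:S. {..<r i}). case_prod A p \<bullet> u = 0}"
  by (auto simp: agent_ker_def matvec_def)

lemma agent_ker_Inter_eq_if_agg_argmin_eq:
  assumes "finite S" "finite T" and "agg_argmin r A b S = agg_argmin r A b T"
  shows "(\<Inter>i\<in>S. agent_ker r A i) = (\<Inter>i\<in>T. agent_ker r A i)"
proof -
  have fin: "finite (SIGMA i:S. {..<r i})" "finite (SIGMA i:T. {..<r i})"
    using assms(1,2) by auto
  have "lsq_argmin (case_prod A) (case_prod b) (SIGMA i:S. {..<r i}) =
      lsq_argmin (case_prod A) (case_prod b) (SIGMA i:T. {..<r i})"
    using assms by (simp add: agg_argmin_eq_lsq_argmin)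
  then show ?thesis
    unfolding agent_ker_Inter_eq using lsq_kernel_eq_if_argmin_eq[OF fin] by blast
qed

lemma obtain_subset_with_card_n_containing:
  assumes "finite S" "x \<in> S" "0 < n" "n \<le> card S"
  obtains T where "T \<subseteq> S" "card T = n" "x \<in> T"
proof -
  have "n - 1 \<le> card (S - {x})"
    using assms by simp
  then obtain T' where T': "T' \<subseteq> S - {x}" "card T' = n - 1" "finite T'"
    by (rule obtain_subset_with_card_n)
  moreover have "x \<notin> T'"
    using T' by blast
  ultimately have "insert x T' \<subseteq> S" "card (insert x T') = n"
    using assms by auto
  then show ?thesis
    using that by blast
qed

lemma k_redundant_agent_ker_Inter_subset:
  assumes "k < n" and "k_redundant n k r A b"
    and "S \<subseteq> {1..n}" "card S = n - k"
  shows "(\<Inter>i\<in>S. agent_ker r A i) \<subseteq> (\<Inter>i\<in>{1..n}. agent_ker r A i)"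
proof (rule INT_greatest)
  fix i assume "i \<in> {1..n}"
  then obtain T where T: "T \<subseteq> {1..n}" "card T = n - k" "i \<in> T"
    using obtain_subset_with_card_n_containing[of "{1..n}" i "n - k"] \<open>k < n\<close> by auto
  have "agg_argmin r A b S = agg_argmin r A b T"
    using assms(2-4) T(1,2) unfolding k_redundant_def by blast
  moreover have "finite S" "finite T"
    using assms(3) T(1) finite_subset by auto
  ultimately have "(\<Inter>i\<in>S. agent_ker r A i) = (\<Inter>i\<in>T. agent_ker r A i)"
    by (intro agent_ker_Inter_eq_if_agg_argmin_eq)
  then show "(\<Inter>i\<in>S. agent_ker r A i) \<subseteq> agent_ker r A i"
    using T(3) by blast
qed

theorem lemma4:
  fixes n k :: nat and r :: "nat \<Rightarrow> nat"
    and A :: "nat \<Rightarrow> nat \<Rightarrow> real^'d" and b :: "nat \<Rightarrow> nat \<Rightarrow> real"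
  assumes "k < n"
    and "k_redundant n k r A b"
    and "(\<Inter>i\<in>{1..n}. agent_ker r A i) = {0}"
  shows "\<forall>S. S \<subseteq> {1..n} \<and> card S \<ge> n - k \<longrightarrow> (\<Inter>i\<in>S. agent_ker r A i) = {0}"
proof (intro allI impI)
  fix S assume S: "S \<subseteq> {1..n} \<and> card S \<ge> n - k"
  then obtain S0 where S0: "S0 \<subseteq> S" "card S0 = n - k"
    by (metis obtain_subset_with_card_n)
  have "(\<Inter>i\<in>S. agent_ker r A i) \<subseteq> (\<Inter>i\<in>S0. agent_ker r A i)"
    using S0(1) by (rule INT_anti_mono) simp
  also have "\<dots> \<subseteq> (\<Inter>i\<in>{1..n}. agent_ker r A i)"
    using k_redundant_agent_ker_Inter_subset[OF assms(1,2) _ S0(2)] S S0(1) by blast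
  finally have "(\<Inter>i\<in>S. agent_ker r A i) \<subseteq> {0}"
    using assms(3) by simp
  moreover have "0 \<in> agent_ker r A i" for i
    by (simp add: agent_ker_def matvec_def)
  ultimately show "(\<Inter>i\<in>S. agent_ker r A i) = {0}"
    by blast
qed

end
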